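(* Let $k\geq3$, $A=\{0,1,\dots,k-1\}$, $N=k-1$ and let $T\colon A^{N^2}\to A$ be given by $T(x_{1,1},\dots,x_{1,N},\dots,x_{N,1},\dots,x_{N,N})=1$ if $x_{i,j}=i$ for all $i,j$ or $x_{i,j}=j$ for all $i,j$, and $0$ otherwise. For $j\in A$ and $a\in A$ let $u_{j,a}\colon A\to A$ be given by $u_{j,a}(x)=a$ if $x=j$ and $u_{j,a}(x)=0$ otherwise. Then \[\{T\}^{*(1)}\supseteq\{u_{j,a} : a\in A,\ j\in A\setminus\{0,1\}\}.\]
   Context: An $m$-ary $g$ commutes with an $n$-ary $h$ if $g\bigl((h((x_{ij})_{j}))_{i}\bigr)=h\bigl((g((x_{ij})_{i}))_{j}\bigr)$ for all $(x_{ij})\in A^{m\times n}$. For $F$ a set of finitary operations on $A$, $F^*$ is the set of all finitary operations of positive arity commuting with every member of $F$, and $F^{*(1)}$ is the set of unary members of $F^*$. *)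

theory Defs
  imports Main
begin

text \<open>Finitary operations on a carrier A (a set of naturals) are represented as pairs
  (arity m, f) with f :: nat list \<Rightarrow> nat; f is applied to argument lists of length m.\<close>

definition is_op :: "nat set \<Rightarrow> nat \<Rightarrow> (nat list \<Rightarrow> nat) \<Rightarrow> bool" where
  "is_op A m f \<longleftrightarrow> (\<forall>xs. length xs = m \<and> set xs \<subseteq> A \<longrightarrow> f xs \<in> A)"

definition commutes :: "nat set \<Rightarrow> nat \<Rightarrow> (nat list \<Rightarrow> nat) \<Rightarrow> nat \<Rightarrow> (nat list \<Rightarrow> nat) \<Rightarrow> bool" where
  "commutes A m g n h \<longleftrightarrow>
     (\<forall>x :: nat \<Rightarrow> nat \<Rightarrow> nat. (\<forall>i<m. \<forall>j<n. x i j \<in> A) \<longrightarrow>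
        g (map (\<lambda>i. h (map (\<lambda>j. x i j) [0..<n])) [0..<m])
      = h (map (\<lambda>j. g (map (\<lambda>i. x i j) [0..<m])) [0..<n]))"

definition centralizer :: "nat set \<Rightarrow> (nat \<times> (nat list \<Rightarrow> nat)) set \<Rightarrow> (nat \<times> (nat list \<Rightarrow> nat)) set" where
  "centralizer A F = {(m, g). 0 < m \<and> is_op A m g \<and> (\<forall>(n, h) \<in> F. commutes A m g n h)}"

definition centralizer1 :: "nat set \<Rightarrow> (nat \<times> (nat list \<Rightarrow> nat)) set \<Rightarrow> (nat \<times> (nat list \<Rightarrow> nat)) set" where
  "centralizer1 A F = {(m, g) \<in> centralizer A F. m = 1}"

text \<open>The N^2-ary operation T with N = k - 1; arguments ordered
  x_{1,1},...,x_{1,N},...,x_{N,1},...,x_{N,N}, so x_{i,j} = xs ! ((i-1)*N + (j-1)).\<close>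
definition opT :: "nat \<Rightarrow> nat list \<Rightarrow> nat" where
  "opT k xs = (let N = k - 1 in
     if (\<forall>i\<in>{1..N}. \<forall>j\<in>{1..N}. xs ! ((i - 1) * N + (j - 1)) = i)
      \<or> (\<forall>i\<in>{1..N}. \<forall>j\<in>{1..N}. xs ! ((i - 1) * N + (j - 1)) = j)
     then 1 else 0)"

definition u :: "nat \<Rightarrow> nat \<Rightarrow> nat \<Rightarrow> nat" where
  "u j a x = (if x = j then a else 0)"

end

theory Submission
  imports Defs
begin

text \<open>T takes only the values 0 and 1, and both are killed by \<open>u\<^sub>j\<^sub>,\<^sub>a\<close> because \<open>j \<ge> 2\<close>; so
  \<open>u\<^sub>j\<^sub>,\<^sub>a(T(x)) = 0\<close>. On the other side, \<open>u\<^sub>j\<^sub>,\<^sub>a\<close> maps every argument into \<open>{0, a}\<close>, whereas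
  T can only be nonzero on a tuple containing both 1 (at \<open>x\<^sub>1\<^sub>,\<^sub>1\<close>) and 2 (at \<open>x\<^sub>2\<^sub>,\<^sub>1\<close> or
  \<open>x\<^sub>1\<^sub>,\<^sub>2\<close>); hence \<open>T(u\<^sub>j\<^sub>,\<^sub>a(x)) = 0\<close> as well.\<close>

lemma commutes_unaryI:
  assumes "\<And>xs. length xs = n \<Longrightarrow> set xs \<subseteq> A \<Longrightarrow> g (h xs) = h (map g xs)"
  shows "commutes A 1 (\<lambda>xs. g (xs ! 0)) n h"
  unfolding commutes_def
proof (intro allI impI)
  fix x :: "nat \<Rightarrow> nat \<Rightarrow> nat"
  assume "\<forall>i<1. \<forall>j<n. x i j \<in> A"
  then have "set (map (x 0) [0..<n]) \<subseteq> A" by auto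
  then have "g (h (map (x 0) [0..<n])) = h (map g (map (x 0) [0..<n]))"
    using assms by simp
  then show "g (map (\<lambda>i. h (map (x i) [0..<n])) [0..<1] ! 0)
      = h (map (\<lambda>j. g (map (\<lambda>i. x i j) [0..<1] ! 0)) [0..<n])"
    by (simp add: comp_def)
qed

lemma opT_le_1: "opT k xs \<le> 1"
  unfolding opT_def Let_def by simp

lemma opT_nonzero_imp_1_2_in_set:
  assumes "3 \<le> k" and "length xs = (k - 1)^2" and "opT k xs \<noteq> 0"
  shows "1 \<in> set xs \<and> 2 \<in> set xs"
proof -
  define N where "N = k - 1"
  have "2 \<le> N" using assms(1) by (simp add: N_def)
  then have "N * 1 < N * N" by (intro mult_strict_left_mono) auto
  moreover have "length xs = N * N"
    using assms(2) by (simp add: N_def power2_eq_square)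
  ultimately have idx: "0 < length xs" "1 < length xs" "N < length xs"
    using \<open>2 \<le> N\<close> by linarith+
  have "(\<forall>i\<in>{1..N}. \<forall>j\<in>{1..N}. xs ! ((i - 1) * N + (j - 1)) = i)
      \<or> (\<forall>i\<in>{1..N}. \<forall>j\<in>{1..N}. xs ! ((i - 1) * N + (j - 1)) = j)"
    using assms(3) unfolding opT_def Let_def N_def by (auto split: if_splits)
  then have "xs ! 0 = 1 \<and> (xs ! N = 2 \<or> xs ! 1 = 2)"
  proof
    assume "\<forall>i\<in>{1..N}. \<forall>j\<in>{1..N}. xs ! ((i - 1) * N + (j - 1)) = i"
    from this[rule_format, of 1 1] this[rule_format, of 2 1] \<open>2 \<le> N\<close>
    show ?thesis by simp
  next
    assume "\<forall>i\<in>{1..N}. \<forall>j\<in>{1..N}. xs ! ((i - 1) * N + (j - 1)) = j"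
    from this[rule_format, of 1 1] this[rule_format, of 1 2] \<open>2 \<le> N\<close>
    show ?thesis by simp
  qed
  with idx show ?thesis by (metis nth_mem)
qed

lemma u_opT_eq_0:
  assumes "2 \<le> j"
  shows "u j a (opT k xs) = 0"
  using assms opT_le_1[of k xs] by (simp add: u_def)

lemma opT_map_u_eq_0:
  assumes "3 \<le> k" and "length xs = (k - 1)^2"
  shows "opT k (map (u j a) xs) = 0"
proof (rule ccontr)
  assume "opT k (map (u j a) xs) \<noteq> 0"
  then have "1 \<in> set (map (u j a) xs) \<and> 2 \<in> set (map (u j a) xs)"
    using assms by (intro opT_nonzero_imp_1_2_in_set) simp_all
  moreover have "set (map (u j a) xs) \<subseteq> {0, a}"
    by (auto simp: u_def)
  ultimately have "1 \<in> {0, a}" and "2 \<in> {0, a}" by blast+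
  then show False by simp
qed

theorem corollary3p3:
  fixes k :: nat
  assumes "k \<ge> 3"
  shows "{(1, \<lambda>xs. u j a (xs ! 0)) | j a. a \<in> {0..<k} \<and> j \<in> {0..<k} - {0, 1}}
           \<subseteq> centralizer1 {0..<k} {((k - 1)^2, opT k)}"
proof (rule subsetI, elim CollectE exE conjE)
  fix p :: "nat \<times> (nat list \<Rightarrow> nat)" and j a :: nat
  assume p: "p = (1, \<lambda>xs. u j a (xs ! 0))" and "a \<in> {0..<k}" and "j \<in> {0..<k} - {0, 1}"
  then have "a < k" and "2 \<le> j" by auto
  have "is_op {0..<k} 1 (\<lambda>xs. u j a (xs ! 0))"
    using \<open>a < k\<close> assms by (auto simp: is_op_def u_def)
  moreover have "commutes {0..<k} 1 (\<lambda>xs. u j a (xs ! 0)) ((k - 1)^2) (opT k)"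
    using u_opT_eq_0[OF \<open>2 \<le> j\<close>] opT_map_u_eq_0[OF assms]
    by (intro commutes_unaryI) simp
  ultimately show "p \<in> centralizer1 {0..<k} {((k - 1)^2, opT k)}"
    by (simp add: p centralizer1_def centralizer_def)
qed

end
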